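(* Let $r\in(0,1)$ and $S_2^{in}>0$ be fixed, and work in the plane $(D,S_1^{in})$. Suppose $m_1>\mu_2(S_2^{in})$ and let $D_1^*=r\mu_2(S_2^{in})$, $D_2^*=(1-r)\mu_2(S_2^{in})$. Then the curve $\gamma_0=\{S_1^{in}=\lambda_1^1(D,r)\}$ and the vertical line $\gamma_6=\{D=D_1^*\}$ intersect at $P_1=(D_1^*,\lambda_1^1(D_1^*,r))$. If in addition $S_2^{in}\ge S_2^m$, then $\gamma_0$, $\gamma_5=\{S_1^{in}=F_{12}(D,r,S_2^{in})\}$ and $\gamma_6$ intersect at the same point $P_1$; if $S_2^{in}<S_2^m$, then $\gamma_0$, $\gamma_4=\{S_1^{in}=F_{11}(D,r,S_2^{in})\}$ and $\gamma_6$ intersect at $P_1$. Moreover (for $D$ where the functions are defined): \begin{itemize} \item if $D<D_1^*$, then $F_{11}(D,r,S_2^{in})<\lambda_1^1(D,r)<F_{12}(D,r,S_2^{in})$; \item if $D>D_1^*$ and $S_2^{in}\ge S_2^m$, then $F_{11}<F_{12}<\lambda_1^1$; \item if $D>D_1^*$ and $S_2^{in}<S_2^m$, then $\lambda_1^1<F_{11}<F_{12}$. \end{itemize} Likewise, the curve $\gamma_1=\{S_1^{in}=\lambda_1^2(D,r)\}$ and the vertical line $\gamma_7=\{D=D_2^*\}$ intersect at $P_2=(D_2^*,\lambda_1^2(D_2^*,r))$; if $S_2^{in}\ge S_2^m$, then $\gamma_1$, $\gamma_3=\{S_1^{in}=F_{22}(D,r,S_2^{in})\}$ and $\gamma_7$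 intersect at $P_2$; if $S_2^{in}<S_2^m$, then $\gamma_1$, $\gamma_2=\{S_1^{in}=F_{21}(D,r,S_2^{in})\}$ and $\gamma_7$ intersect at $P_2$. Moreover: \begin{itemize} \item if $D<D_2^*$, then $F_{21}<\lambda_1^2<F_{22}$; \item if $D>D_2^*$ and $S_2^{in}\ge S_2^m$, then $F_{21}<F_{22}<\lambda_1^2$; \item if $D>D_2^*$ and $S_2^{in}<S_2^m$, then $\lambda_1^2<F_{21}<F_{22}$. \end{itemize}
   Context: Let $k_1,k_2>0$, $r_1=r$, $r_2=1-r$, $D_i=D/r_i$. $\mu_1\in C^1(\mathbb R_+)$ with $\mu_1(0)=0$, $\mu_1(+\infty)=m_1$, $\mu_1'>0$ on $(0,\infty)$; $\mu_2\in C^1(\mathbb R_+)$ with $\mu_2(0)=0$, $\mu_2(+\infty)=0$, and there is $S_2^m>0$ with $\mu_2'>0$ on $(0,S_2^m)$, $\mu_2'<0$ on $(S_2^m,\infty)$. For $i=1,2$: $\lambda_1^i(D,r)$ is the unique solution of $\mu_1(S)=D_i$ for $0<D<r_im_1$ ($+\infty$ otherwise); $\lambda_2^{i1}(D,r)\le\lambda_2^{i2}(D,r)$ are the solutions of $\mu_2(S)=D_i$ for $0<D\le r_i\mu_2(S_2^m)$ ($+\infty$ otherwise); $F_{ij}(D,r,S_2^{in})=\lambda_1^i(D,r)+\frac{k_1}{k_2}(\lambda_2^{ij}(D,r)-S_2^{in})$, defined for $0<D<\min(r_im_1,r_i\mu_2(S_2^m))$. *)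

theory Defs
  imports "HOL-Analysis.Analysis"
begin

definition rr :: "nat \<Rightarrow> real \<Rightarrow> real" where
  "rr i r = (if i = 1 then r else 1 - r)"

text \<open>lambda_1^i(D,r): the unique solution S of mu_1(S) = D / r_i (meaningful for 0 < D < r_i m_1).\<close>
definition lam1 :: "(real \<Rightarrow> real) \<Rightarrow> nat \<Rightarrow> real \<Rightarrow> real \<Rightarrow> real" where
  "lam1 mu1 i D r = (THE S. 0 \<le> S \<and> mu1 S = D / rr i r)"

text \<open>lambda_2^{i1}(D,r) <= lambda_2^{i2}(D,r): the smallest and the largest solution S of
  mu_2(S) = D / r_i (meaningful for 0 < D <= r_i mu_2(S_2^m)).\<close>
definition lam2 :: "(real \<Rightarrow> real) \<Rightarrow> nat \<Rightarrow> nat \<Rightarrow> real \<Rightarrow> real \<Rightarrow> real" where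
  "lam2 mu2 i j D r =
     (if j = 1 then Inf {S. 0 \<le> S \<and> mu2 S = D / rr i r}
      else Sup {S. 0 \<le> S \<and> mu2 S = D / rr i r})"

definition Fij :: "real \<Rightarrow> real \<Rightarrow> (real \<Rightarrow> real) \<Rightarrow> (real \<Rightarrow> real) \<Rightarrow> nat \<Rightarrow> nat
    \<Rightarrow> real \<Rightarrow> real \<Rightarrow> real \<Rightarrow> real" where
  "Fij k1 k2 mu1 mu2 i j D r S2in = lam1 mu1 i D r + k1 / k2 * (lam2 mu2 i j D r - S2in)"

text \<open>Curve {S_1^in = lambda_1^i(D,r)} in the (D, S_1^in) plane, over D where lambda_1^i is finite.\<close>
definition curve_lam1 :: "(real \<Rightarrow> real) \<Rightarrow> real \<Rightarrow> nat \<Rightarrow> real \<Rightarrow> (real \<times> real) set" where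
  "curve_lam1 mu1 m1 i r = {(D, lam1 mu1 i D r) | D. 0 < D \<and> D < rr i r * m1}"

text \<open>Curve {S_1^in = F_ij(D,r,S_2^in)}, over D where lambda_1^i and lambda_2^{ij} are finite.\<close>
definition curve_F :: "real \<Rightarrow> real \<Rightarrow> (real \<Rightarrow> real) \<Rightarrow> (real \<Rightarrow> real) \<Rightarrow> real \<Rightarrow> real
    \<Rightarrow> nat \<Rightarrow> nat \<Rightarrow> real \<Rightarrow> real \<Rightarrow> (real \<times> real) set" where
  "curve_F k1 k2 mu1 mu2 m1 S2m i j r S2in =
     {(D, Fij k1 k2 mu1 mu2 i j D r S2in) | D.
        0 < D \<and> D < rr i r * m1 \<and> D \<le> rr i r * mu2 S2m}"

end

theory Submission imports Defs begin

text \<open>Since \<open>\<mu>\<^sub>2\<close> is unimodal, every level \<open>c \<in> (0, \<mu>\<^sub>2(S\<^sub>2\<^sup>m))\<close> is attained exactly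
  twice, at \<open>\<lambda>\<^sub>2\<^sup>i\<^sup>1 < S\<^sub>2\<^sup>m < \<lambda>\<^sub>2\<^sup>i\<^sup>2\<close>. As \<open>F\<^sub>i\<^sub>j - \<lambda>\<^sub>1\<^sup>i = (k\<^sub>1/k\<^sub>2)(\<lambda>\<^sub>2\<^sup>i\<^sup>j - S\<^sub>2\<^sup>i\<^sup>n)\<close>,
  every comparison reduces to locating \<open>S\<^sub>2\<^sup>i\<^sup>n\<close> relative to the two roots of
  \<open>\<mu>\<^sub>2 = D/r\<^sub>i\<close>, which is decided by comparing \<open>\<mu>\<^sub>2(S\<^sub>2\<^sup>i\<^sup>n)\<close> with \<open>D/r\<^sub>i\<close>, i.e. \<open>D\<close>
  with \<open>D\<^sub>i\<^sup>*\<close>, and on which branch \<open>S\<^sub>2\<^sup>i\<^sup>n\<close> lies. At \<open>D = D\<^sub>i\<^sup>*\<close>, \<open>S\<^sub>2\<^sup>i\<^sup>n\<close> is itself the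
  root on its own branch, so \<open>F\<^sub>i\<^sub>j = \<lambda>\<^sub>1\<^sup>i\<close> there.\<close>

locale unimodal =
  fixes f :: "real \<Rightarrow> real" and m :: real
  assumes mode_pos: "0 < m"
    and continuous: "continuous_on {0..} f"
    and strict_mono_left: "strict_mono_on {0..m} f"
    and strict_antimono_right: "strict_antimono_on {m..} f"
    and at_zero: "f 0 = 0"
    and tendsto_zero: "(f \<longlongrightarrow> 0) at_top"
begin

lemma left_less_iff: "x \<in> {0..m} \<Longrightarrow> y \<in> {0..m} \<Longrightarrow> f x < f y \<longleftrightarrow> x < y"
  by (rule strict_mono_on_less[OF strict_mono_left])

lemma right_less_iff: "x \<in> {m..} \<Longrightarrow> y \<in> {m..} \<Longrightarrow> f x < f y \<longleftrightarrow> y < x"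
  using monotone_onD[OF strict_antimono_right] by (metis linorder_cases order_less_asym)

lemma le_at_mode: "0 \<le> x \<Longrightarrow> f x \<le> f m"
  using left_less_iff[of x m] right_less_iff[of x m] mode_pos by (cases "x \<le> m") auto

lemma pos_if_pos:
  assumes "0 < x"
  shows "0 < f x"
proof (cases "x \<le> m")
  case True
  then show ?thesis using assms left_less_iff[of 0 x] at_zero by simp
next
  case False
  have "eventually (\<lambda>y. f y \<le> f (x + 1)) at_top"
    using right_less_iff[of _ "x + 1"] False
    by (auto simp: eventually_at_top_linorder le_less intro!: exI[of _ "x + 1"])
  then have "0 \<le> f (x + 1)" by (rule tendsto_upperbound[OF tendsto_zero]) simp
  also have "f (x + 1) < f x" using right_less_iff[of "x + 1" x] False by simp
  finally show ?thesis .
qed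

lemma roots_exist:
  assumes "0 < c" "c < f m"
  obtains a b where "a \<in> {0..<m}" "b \<in> {m<..}" "f a = c" "f b = c"
proof -
  have "continuous_on {0..m} f" by (rule continuous_on_subset[OF continuous]) auto
  then obtain a where a: "a \<in> {0..m}" "f a = c"
    using IVT'[of f 0 c m] assms mode_pos at_zero by force
  obtain Y where Y: "m \<le> Y" "f Y < c"
    using order_tendstoD(2)[OF tendsto_zero \<open>0 < c\<close>]
    by (metis eventually_at_top_linorder linorder_linear order_refl max.cobounded1 max.cobounded2)
  have "continuous_on {m..Y} f" by (rule continuous_on_subset[OF continuous]) (use mode_pos in auto)
  then obtain b where b: "b \<in> {m..}" "f b = c"
    using IVT2'[of f Y c m] assms Y by force
  have "a \<noteq> m" "b \<noteq> m" using a b assms(2) by auto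
  with a b show ?thesis using that[of a b] by auto
qed

lemma level_set_eq:
  assumes "a \<in> {0..m}" "b \<in> {m..}" "f a = c" "f b = c"
  shows "{x. 0 \<le> x \<and> f x = c} = {a, b}"
proof (intro equalityI subsetI)
  fix x assume "x \<in> {x. 0 \<le> x \<and> f x = c}"
  then have x: "0 \<le> x" "f x = f a" "f x = f b" using assms by auto
  show "x \<in> {a, b}"
  proof (cases "x \<le> m")
    case True
    then show ?thesis using x assms(1) left_less_iff[of x a] left_less_iff[of a x] by force
  next
    case False
    then show ?thesis using x assms(2) right_less_iff[of x b] right_less_iff[of b x] by force
  qed
qed (use assms in auto)

lemma lam2_roots:
  assumes "0 < rr i r" "0 < D" "D < rr i r * f m"
  shows "lam2 f i 1 D r \<in> {0..<m}" "f (lam2 f i 1 D r) = D / rr i r"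
    and "lam2 f i 2 D r \<in> {m<..}" "f (lam2 f i 2 D r) = D / rr i r"
proof -
  have "0 < D / rr i r" "D / rr i r < f m" using assms by (simp_all add: field_simps)
  then obtain a b where ab: "a \<in> {0..<m}" "b \<in> {m<..}" "f a = D / rr i r" "f b = D / rr i r"
    by (rule roots_exist)
  have "{x. 0 \<le> x \<and> f x = D / rr i r} = {a, b}" "a \<le> b"
    using level_set_eq[of a b] ab by auto
  then have "lam2 f i 1 D r = a" "lam2 f i 2 D r = b"
    by (auto simp: lam2_def intro: cInf_eq_minimum cSup_eq_maximum)
  with ab show "lam2 f i 1 D r \<in> {0..<m}" "f (lam2 f i 1 D r) = D / rr i r"
    "lam2 f i 2 D r \<in> {m<..}" "f (lam2 f i 2 D r) = D / rr i r" by simp_all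
qed

lemma lam2_left_at_value:
  assumes "0 < rr i r" "s \<in> {0..m}"
  shows "lam2 f i 1 (rr i r * f s) r = s"
proof -
  have "x \<ge> s" if "0 \<le> x" "f x = f s" for x
    using that assms(2) left_less_iff[of x s] by (cases "x \<le> m") auto
  then show ?thesis using assms by (auto simp: lam2_def intro!: cInf_eq_minimum)
qed

lemma lam2_right_at_value:
  assumes "0 < rr i r" "s \<in> {m..}"
  shows "lam2 f i 2 (rr i r * f s) r = s"
proof -
  have "x \<le> s" if "0 \<le> x" "f x = f s" for x
    using that assms(2) right_less_iff[of x s] by (cases "x \<le> m") auto
  then show ?thesis using assms mode_pos by (auto simp: lam2_def intro!: cSup_eq_maximum)
qed

lemma between_roots:
  assumes "a \<in> {0..m}" "b \<in> {m..}" "f a = c" "f b = c" "0 \<le> s" "c < f s"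
  shows "a < s" "s < b"
  using assms left_less_iff[of a s] right_less_iff[of b s] by (cases "s \<le> m"; force)+

end

lemma unimodal_if_derivative:
  fixes f f' :: "real \<Rightarrow> real" and m :: real
  assumes deriv: "\<forall>x\<ge>0. (f has_real_derivative f' x) (at x within {0..})"
    and "f 0 = 0" "(f \<longlongrightarrow> 0) at_top" "0 < m"
    and incr: "\<forall>x. 0 < x \<and> x < m \<longrightarrow> f' x > 0"
    and decr: "\<forall>x. x > m \<longrightarrow> f' x < 0"
  shows "unimodal f m"
proof
  show cont: "continuous_on {0..} f"
    unfolding continuous_on_eq_continuous_within using deriv DERIV_continuous by fastforce
  have deriv_at: "(f has_real_derivative f' x) (at x)" if "0 < x" for x
    using deriv[rule_format, of x] that at_within_interior[of x "{0..}"] by simp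
  show "strict_mono_on {0..m} f"
  proof (rule monotone_onI)
    fix x y assume xy: "x \<in> {0..m}" "y \<in> {0..m}" "x < y"
    show "f x < f y"
    proof (rule DERIV_pos_imp_increasing_open[OF \<open>x < y\<close>])
      show "\<exists>d. (f has_real_derivative d) (at z) \<and> 0 < d" if "x < z" "z < y" for z
      proof -
        have "0 < z" "z < m" using that xy by auto
        then show ?thesis using deriv_at incr by blast
      qed
      show "continuous_on {x..y} f"
        by (rule continuous_on_subset[OF cont]) (use xy in auto)
    qed
  qed
  show "strict_antimono_on {m..} f"
  proof (rule monotone_onI)
    fix x y assume xy: "x \<in> {m..}" "y \<in> {m..}" "x < y"
    show "f y < f x"
    proof (rule DERIV_neg_imp_decreasing_open[OF \<open>x < y\<close>])
      show "\<exists>d. (f has_real_derivative d) (at z) \<and> d < 0" if "x < z" "z < y" for z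
      proof -
        have "0 < z" "m < z" using that xy \<open>0 < m\<close> by auto
        then show ?thesis using deriv_at decr by blast
      qed
      show "continuous_on {x..y} f"
        by (rule continuous_on_subset[OF cont]) (use xy \<open>0 < m\<close> in auto)
    qed
  qed
qed (use assms in auto)

context
  fixes k1 k2 :: real and mu1 mu2 :: "real \<Rightarrow> real"
  assumes k_pos: "0 < k1 / k2"
begin

lemma Fij_less_Fij_iff:
  "Fij k1 k2 mu1 mu2 i j D r s < Fij k1 k2 mu1 mu2 i j' D r s
    \<longleftrightarrow> lam2 mu2 i j D r < lam2 mu2 i j' D r"
  unfolding Fij_def by (simp only: add_less_cancel_left mult_less_cancel_left_pos[OF k_pos]) simp

lemma Fij_less_lam1_iff: "Fij k1 k2 mu1 mu2 i j D r s < lam1 mu1 i D r \<longleftrightarrow> lam2 mu2 i j D r < s"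
  unfolding Fij_def using k_pos by (simp only: add_less_same_cancel1 mult_less_0_iff) auto

lemma lam1_less_Fij_iff: "lam1 mu1 i D r < Fij k1 k2 mu1 mu2 i j D r s \<longleftrightarrow> s < lam2 mu2 i j D r"
  unfolding Fij_def using k_pos by (simp only: less_add_same_cancel1 zero_less_mult_iff) auto

end

lemma curve_lam1_inter_vertical:
  assumes "0 < Ds" "Ds < rr i r * m1"
  shows "curve_lam1 mu1 m1 i r \<inter> {Ds} \<times> UNIV = {(Ds, lam1 mu1 i Ds r)}"
  using assms by (auto simp: curve_lam1_def)

lemma curve_lam1_inter_curve_F_inter_vertical:
  assumes "0 < Ds" "Ds < rr i r * m1" "Ds \<le> rr i r * mu2 S2m" "lam2 mu2 i j Ds r = S2in"
  shows "curve_lam1 mu1 m1 i r \<inter> curve_F k1 k2 mu1 mu2 m1 S2m i j r S2in \<inter> {Ds} \<times> UNIV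
    = {(Ds, lam1 mu1 i Ds r)}"
  using assms by (auto simp: curve_lam1_def curve_F_def Fij_def)

lemma (in unimodal) Fij_lam1_order:
  fixes k1 k2 :: real and mu1 :: "real \<Rightarrow> real"
  assumes k: "0 < k1 / k2" and ri: "0 < rr i r" and s: "0 \<le> s"
    and D: "0 < D" "D < rr i r * f m"
  defines "L \<equiv> lam1 mu1 i D r" and "F \<equiv> \<lambda>j. Fij k1 k2 mu1 f i j D r s"
  shows "D < rr i r * f s \<Longrightarrow> F 1 < L \<and> L < F 2"
    and "rr i r * f s < D \<Longrightarrow> m \<le> s \<Longrightarrow> F 1 < F 2 \<and> F 2 < L"
    and "rr i r * f s < D \<Longrightarrow> s < m \<Longrightarrow> L < F 1 \<and> F 1 < F 2"
proof -
  define a b where "a = lam2 f i 1 D r" and "b = lam2 f i 2 D r"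
  have a: "a \<in> {0..m}" "f a = D / rr i r" and b: "b \<in> {m..}" "f b = D / rr i r"
    and "a < b"
    using lam2_roots[OF ri D] unfolding a_def b_def by auto
  have F: "F 1 < F 2 \<longleftrightarrow> a < b" "F 1 < L \<longleftrightarrow> a < s" "F 2 < L \<longleftrightarrow> b < s"
    "L < F 1 \<longleftrightarrow> s < a" "L < F 2 \<longleftrightarrow> s < b"
    unfolding F_def L_def a_def b_def
    by (simp_all only: Fij_less_Fij_iff[OF k] Fij_less_lam1_iff[OF k] lam1_less_Fij_iff[OF k])
  have "D = rr i r * f a" using ri a(2) by (simp add: field_simps)
  then have D_less_iff: "D < rr i r * f s \<longleftrightarrow> f a < f s"
    and less_D_iff: "rr i r * f s < D \<longleftrightarrow> f s < f a"
    using ri by simp_all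
  show "F 1 < L \<and> L < F 2" if "D < rr i r * f s"
    using between_roots[OF a(1) b(1) refl b(2)[folded a(2)] s] that
    unfolding F D_less_iff by blast
  show "F 1 < F 2 \<and> F 2 < L" if "rr i r * f s < D" "m \<le> s"
    using right_less_iff[of s b] that a(2) b \<open>a < b\<close> unfolding F less_D_iff by simp
  show "L < F 1 \<and> F 1 < F 2" if "rr i r * f s < D" "s < m"
    using left_less_iff[of s a] that a s \<open>a < b\<close> unfolding F less_D_iff by simp
qed

theorem proposition4p2:
  fixes mu1 mu2 mu1' mu2' :: "real \<Rightarrow> real" and k1 k2 r S2in m1 S2m :: real
  assumes k1: "k1 > 0" and k2: "k2 > 0"
    and r: "0 < r" "r < 1"
    and S2in: "S2in > 0"
    and mu1_deriv: "\<forall>x\<ge>0. (mu1 has_real_derivative mu1' x) (at x within {0..})"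
    and mu1'_cont: "continuous_on {0..} mu1'"
    and mu1_0: "mu1 0 = 0"
    and mu1_lim: "(mu1 \<longlongrightarrow> m1) at_top"
    and mu1_incr: "\<forall>x>0. mu1' x > 0"
    and mu2_deriv: "\<forall>x\<ge>0. (mu2 has_real_derivative mu2' x) (at x within {0..})"
    and mu2'_cont: "continuous_on {0..} mu2'"
    and mu2_0: "mu2 0 = 0"
    and mu2_lim: "(mu2 \<longlongrightarrow> 0) at_top"
    and S2m: "S2m > 0"
    and mu2_incr: "\<forall>x. 0 < x \<and> x < S2m \<longrightarrow> mu2' x > 0"
    and mu2_decr: "\<forall>x. x > S2m \<longrightarrow> mu2' x < 0"
    and m1: "m1 > mu2 S2in"
  shows "\<forall>i\<in>{1::nat, 2}.
    (let Ds = rr i r * mu2 S2in;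
         P = (Ds, lam1 mu1 i Ds r);
         V = {Ds} \<times> (UNIV :: real set);
         G = curve_lam1 mu1 m1 i r;
         L = (\<lambda>D. lam1 mu1 i D r);
         F = (\<lambda>j D. Fij k1 k2 mu1 mu2 i j D r S2in)
     in G \<inter> V = {P}
      \<and> (S2in \<ge> S2m \<longrightarrow> G \<inter> curve_F k1 k2 mu1 mu2 m1 S2m i 2 r S2in \<inter> V = {P})
      \<and> (S2in < S2m \<longrightarrow> G \<inter> curve_F k1 k2 mu1 mu2 m1 S2m i 1 r S2in \<inter> V = {P})
      \<and> (\<forall>D. 0 < D \<and> D < min (rr i r * m1) (rr i r * mu2 S2m) \<longrightarrow>
            (D < Ds \<longrightarrow> F 1 D < L D \<and> L D < F 2 D)
          \<and> (D > Ds \<and> S2in \<ge> S2m \<longrightarrow> F 1 D < F 2 D \<and> F 2 D < L D)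
          \<and> (D > Ds \<and> S2in < S2m \<longrightarrow> L D < F 1 D \<and> F 1 D < F 2 D)))"
proof (intro ballI, goal_cases)
  case (1 i)
  then have ri: "0 < rr i r" using r by (auto simp: rr_def)
  interpret unimodal mu2 S2m
    using mu2_deriv mu2_0 mu2_lim S2m mu2_incr mu2_decr by (rule unimodal_if_derivative)
  define Ds where "Ds = rr i r * mu2 S2in"
  have Ds: "0 < Ds" "Ds < rr i r * m1" "Ds \<le> rr i r * mu2 S2m"
    using ri pos_if_pos[OF S2in] le_at_mode[of S2in] S2in m1 by (simp_all add: Ds_def)
  have lam2_Ds: "S2m \<le> S2in \<Longrightarrow> lam2 mu2 i 2 Ds r = S2in"
    "S2in < S2m \<Longrightarrow> lam2 mu2 i 1 Ds r = S2in"
    using lam2_right_at_value[OF ri] lam2_left_at_value[OF ri] S2in unfolding Ds_def by simp_all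
  have k: "0 < k1 / k2" using k1 k2 by simp
  show ?case
    unfolding Let_def Ds_def[symmetric]
    using curve_lam1_inter_vertical[OF Ds(1,2)]
      curve_lam1_inter_curve_F_inter_vertical[of Ds i r m1 mu2 S2m, OF Ds] lam2_Ds
      Fij_lam1_order[OF k ri less_imp_le[OF S2in], of _ mu1]
    by (auto simp: Ds_def)
qed

end
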